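(* If $(X_{n})$ is a nondecreasing sequence of subsets of $\mathbb{R}^{N}$, then $\mu_{N}(\overline{B}_{\cup_n X_{n}})=\lim_n \mu_{N}(\overline{B}_{X_{n}})=\sup_n \mu_{N}(\overline{B}_{X_{n}})$.
   Context: $\mu_N$ is $N$-dimensional Lebesgue measure. For nonempty bounded $X\subset\mathbb{R}^N$, $\overline{B}_X$ (the enclosing ball) is the unique closed ball of minimal diameter containing $X$; $\overline{B}_X:=\mathbb{R}^N$ if $X$ is unbounded; $\overline{B}_\emptyset:=\{0\}$. *)

theory Defs
  imports "HOL-Analysis.Analysis"
begin

definition is_closed_ball :: "'a::euclidean_space set \<Rightarrow> bool" where
  "is_closed_ball B \<longleftrightarrow> (\<exists>c r. r \<ge> 0 \<and> B = cball c r)"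

definition enclosing_ball :: "'a::euclidean_space set \<Rightarrow> 'a set" where
  "enclosing_ball X =
     (if X = {} then {0}
      else if \<not> bounded X then UNIV
      else (THE B. is_closed_ball B \<and> X \<subseteq> B \<and>
              (\<forall>B'. is_closed_ball B' \<and> X \<subseteq> B' \<longrightarrow> diameter B \<le> diameter B')))"

end

theory Submission
  imports Defs
begin

text \<open>A nonempty bounded set has a smallest enclosing ball: its radius is an infimum, attained
  because the centres admissible for slightly larger radii form a nested sequence of nonempty
  compact sets, and its centre is unique by the parallelogram law. Along an increasing sequence
  of sets the radii increase. If they stay below some L, the same compactness argument yields a
  ball of radius L containing the union, so the radius of the union is their limit; otherwise the
  volumes already tend to infinity.\<close>

definition enclosing_radius :: "'a::metric_space set \<Rightarrow> real" where
  "enclosing_radius X = Inf {r. \<exists>c. X \<subseteq> cball c r}"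

lemma incseq_Union_subset_cball_lim:
  fixes X :: "nat \<Rightarrow> 'a::heine_borel set"
  assumes "incseq X" "decseq r" "r \<longlonglongrightarrow> R" "X 0 \<noteq> {}"
    and cover: "\<And>n. X n \<subseteq> cball (c n) (r n)"
  shows "\<exists>c. (\<Union>n. X n) \<subseteq> cball c R"
proof -
  obtain x0 where x0: "x0 \<in> X 0" using \<open>X 0 \<noteq> {}\<close> by blast
  have x0n: "x0 \<in> X n" for n using x0 \<open>incseq X\<close> by (auto simp: incseq_def)
  define F where "F n = cball x0 (r n) \<inter> (\<Inter>x\<in>X n. cball x (r n))" for n
  have "\<Inter>(range F) \<noteq> {}"
  proof (rule compact_nest)
    show "compact (F n)" for n
      unfolding F_def by (intro compact_Int_closed compact_cball closed_INT) auto
    have "c n \<in> F n" for n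
      using cover[of n] x0n[of n] unfolding F_def by (auto simp: dist_commute subset_iff)
    then show "F n \<noteq> {}" for n by blast
    show "F n \<subseteq> F m" if "m \<le> n" for m n
      using that \<open>incseq X\<close> \<open>decseq r\<close> by (fastforce simp: F_def incseq_def decseq_def)
  qed
  then obtain c where c: "\<And>n. c \<in> F n" by blast
  have "dist c x \<le> R" if "x \<in> X k" for x k
  proof (rule LIMSEQ_le_const[OF \<open>r \<longlonglongrightarrow> R\<close>], intro exI allI impI)
    fix m assume "m \<ge> k"
    then have "x \<in> X m" using that \<open>incseq X\<close> by (auto simp: incseq_def)
    then show "dist c x \<le> r m" using c[of m] by (auto simp: F_def dist_commute)
  qed
  then show ?thesis by (auto simp: subset_iff)
qed

lemma enclosing_radius_le:
  assumes "X \<noteq> {}" "X \<subseteq> cball c r"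
  shows "enclosing_radius X \<le> r"
  unfolding enclosing_radius_def
proof (rule cInf_lower)
  show "bdd_below {r. \<exists>c. X \<subseteq> cball c r}"
    using \<open>X \<noteq> {}\<close> by (intro bdd_belowI[of _ 0]) (auto intro: order_trans[OF zero_le_dist])
qed (use assms in blast)

lemma enclosing_radius_attained:
  fixes X :: "'a::heine_borel set"
  assumes "X \<noteq> {}" "bounded X"
  shows "\<exists>c. X \<subseteq> cball c (enclosing_radius X)"
proof -
  let ?R = "enclosing_radius X"
  have "\<exists>c. X \<subseteq> cball c (?R + inverse (real (Suc n)))" for n
  proof -
    have "{r. \<exists>c. X \<subseteq> cball c r} \<noteq> {}" using \<open>bounded X\<close> by (auto simp: bounded_subset_cball)
    moreover have "Inf {r. \<exists>c. X \<subseteq> cball c r} < ?R + inverse (real (Suc n))"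
      by (simp add: enclosing_radius_def)
    ultimately obtain r where "r \<in> {r. \<exists>c. X \<subseteq> cball c r}" "r < ?R + inverse (real (Suc n))"
      by (rule cInf_lessD[THEN bexE])
    then obtain c where "X \<subseteq> cball c r" "r < ?R + inverse (real (Suc n))" by blast
    then show ?thesis by (meson subset_cball order_less_imp_le subset_trans)
  qed
  then obtain c where "\<And>n. X \<subseteq> cball (c n) (?R + inverse (real (Suc n)))" by metis
  moreover have "decseq (\<lambda>n. ?R + inverse (real (Suc n)))"
    by (intro decseq_SucI) (simp add: field_simps)
  moreover have "(\<lambda>n. ?R + inverse (real (Suc n))) \<longlonglongrightarrow> ?R"
    using tendsto_add[OF tendsto_const LIMSEQ_inverse_real_of_nat] by simp
  ultimately have "\<exists>c. (\<Union>n::nat. X) \<subseteq> cball c ?R"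
    by (intro incseq_Union_subset_cball_lim[where X = "\<lambda>_. X"]) (simp_all add: \<open>X \<noteq> {}\<close>)
  then show ?thesis by simp
qed

lemma enclosing_radius_nonneg:
  fixes X :: "'a::heine_borel set"
  assumes "X \<noteq> {}" "bounded X"
  shows "0 \<le> enclosing_radius X"
  using enclosing_radius_attained[OF assms] assms(1) by (auto intro: order_trans[OF zero_le_dist])

lemma enclosing_radius_mono:
  fixes Y :: "'a::heine_borel set"
  assumes "X \<noteq> {}" "X \<subseteq> Y" "bounded Y"
  shows "enclosing_radius X \<le> enclosing_radius Y"
  using enclosing_radius_attained[of Y] assms by (metis enclosing_radius_le subset_empty subset_trans)

lemma incseq_Union_subset_cball_SUP_enclosing_radius:
  fixes X :: "nat \<Rightarrow> 'a::heine_borel set"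
  assumes "incseq X" "X 0 \<noteq> {}" "\<forall>n. bounded (X n)"
    and "bdd_above (range (\<lambda>n. enclosing_radius (X n)))"
  shows "\<exists>c. (\<Union>n. X n) \<subseteq> cball c (SUP n. enclosing_radius (X n))"
proof -
  let ?L = "SUP n. enclosing_radius (X n)"
  have "X n \<noteq> {}" for n using assms(1,2) by (metis incseqD le0 subset_empty)
  then have "\<exists>c. X n \<subseteq> cball c (enclosing_radius (X n))" for n
    using enclosing_radius_attained assms(3) by blast
  moreover have "enclosing_radius (X n) \<le> ?L" for n using assms(4) by (intro cSUP_upper) simp_all
  ultimately have "\<exists>c. X n \<subseteq> cball c ?L" for n by (meson subset_cball subset_trans)
  then obtain c where "\<And>n. X n \<subseteq> cball (c n) ?L" by metis
  then show ?thesis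
    using assms(1,2) by (intro incseq_Union_subset_cball_lim[where r = "\<lambda>_. ?L"]) simp_all
qed

lemma dist_midpoint_square:
  fixes x a b :: "'a::real_inner"
  shows "(dist x (midpoint a b))\<^sup>2 = ((dist x a)\<^sup>2 + (dist x b)\<^sup>2) / 2 - (dist a b)\<^sup>2 / 4"
proof -
  define u v where "u = x - a" and "v = x - b"
  have uv: "x - midpoint a b = (1/2) *\<^sub>R (u + v)" "a - b = v - u"
    by (simp_all add: u_def v_def midpoint_def algebra_simps flip: scaleR_add_left)
  show ?thesis
    unfolding dist_norm uv u_def[symmetric] v_def[symmetric]
    by (simp add: power2_norm_eq_inner inner_add_left inner_add_right inner_diff_left
        inner_diff_right inner_commute field_simps)
qed

lemma enclosing_ball_center_unique:
  fixes X :: "'a::real_inner set"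
  assumes "X \<noteq> {}" "X \<subseteq> cball c1 (enclosing_radius X)" "X \<subseteq> cball c2 (enclosing_radius X)"
  shows "c1 = c2"
proof (rule ccontr)
  assume "c1 \<noteq> c2"
  let ?R = "enclosing_radius X" and ?d = "(dist c1 c2)\<^sup>2 / 4"
  have "X \<subseteq> cball (midpoint c1 c2) (sqrt (?R\<^sup>2 - ?d))"
  proof
    fix x assume "x \<in> X"
    then have "dist x c1 \<le> ?R" "dist x c2 \<le> ?R" using assms by (auto simp: dist_commute)
    then have "(dist x c1)\<^sup>2 \<le> ?R\<^sup>2" "(dist x c2)\<^sup>2 \<le> ?R\<^sup>2" by (simp_all add: power_mono)
    then have "(dist x (midpoint c1 c2))\<^sup>2 \<le> ?R\<^sup>2 - ?d"
      unfolding dist_midpoint_square by simp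
    then show "x \<in> cball (midpoint c1 c2) (sqrt (?R\<^sup>2 - ?d))"
      by (simp add: dist_commute real_le_rsqrt)
  qed
  then have "?R \<le> sqrt (?R\<^sup>2 - ?d)" by (rule enclosing_radius_le[OF \<open>X \<noteq> {}\<close>])
  also have "\<dots> < sqrt (?R\<^sup>2)" using \<open>c1 \<noteq> c2\<close> by (intro real_sqrt_less_mono) simp
  also have "\<dots> = ?R" using assms(1,2) by (auto intro: order_trans[OF zero_le_dist])
  finally show False by simp
qed

lemma enclosing_ball_eq_cball:
  fixes X :: "'a::euclidean_space set"
  assumes "X \<noteq> {}" "bounded X" and cover: "X \<subseteq> cball c (enclosing_radius X)"
  shows "enclosing_ball X = cball c (enclosing_radius X)"
proof -
  let ?R = "enclosing_radius X"
  have "?R \<ge> 0" using assms(1,2) by (rule enclosing_radius_nonneg)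
  have minimal: "?R \<le> r" if "X \<subseteq> cball c' r" for c' r
    using enclosing_radius_le[OF \<open>X \<noteq> {}\<close> that] .
  have "(THE B. is_closed_ball B \<and> X \<subseteq> B \<and>
          (\<forall>B'. is_closed_ball B' \<and> X \<subseteq> B' \<longrightarrow> diameter B \<le> diameter B')) = cball c ?R"
  proof (rule the_equality)
    show "is_closed_ball (cball c ?R) \<and> X \<subseteq> cball c ?R \<and>
          (\<forall>B'. is_closed_ball B' \<and> X \<subseteq> B' \<longrightarrow> diameter (cball c ?R) \<le> diameter B')"
      using \<open>?R \<ge> 0\<close> cover minimal by (auto simp: is_closed_ball_def)
  next
    fix B assume B: "is_closed_ball B \<and> X \<subseteq> B \<and>
          (\<forall>B'. is_closed_ball B' \<and> X \<subseteq> B' \<longrightarrow> diameter B \<le> diameter B')"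
    then obtain c' r where "r \<ge> 0" "B = cball c' r" "X \<subseteq> cball c' r"
      by (auto simp: is_closed_ball_def)
    moreover have "diameter B \<le> diameter (cball c ?R)"
      using B cover \<open>?R \<ge> 0\<close> unfolding is_closed_ball_def by blast
    ultimately have "r = ?R" using \<open>?R \<ge> 0\<close> minimal by fastforce
    with \<open>X \<subseteq> cball c' r\<close> have "c' = c"
      using enclosing_ball_center_unique[OF \<open>X \<noteq> {}\<close> _ cover] by blast
    with \<open>B = cball c' r\<close> \<open>r = ?R\<close> show "B = cball c ?R" by simp
  qed
  with assms(1,2) show ?thesis by (simp add: enclosing_ball_def)
qed

lemma emeasure_enclosing_ball:
  fixes X :: "'a::euclidean_space set"
  assumes "X \<noteq> {}" "bounded X"
  shows "emeasure lebesgue (enclosing_ball X)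
           = ennreal (unit_ball_vol DIM('a) * enclosing_radius X ^ DIM('a))"
proof -
  obtain c where cover: "X \<subseteq> cball c (enclosing_radius X)"
    using enclosing_radius_attained[OF assms] by blast
  then show ?thesis
    using enclosing_ball_eq_cball[OF assms cover] enclosing_radius_nonneg[OF assms] emeasure_cball
    by simp
qed

lemma emeasure_enclosing_ball_unbounded:
  assumes "\<not> bounded X"
  shows "emeasure lebesgue (enclosing_ball X) = \<infinity>"
  using assms by (auto simp: enclosing_ball_def)

lemma emeasure_enclosing_ball_mono:
  fixes X :: "'a::euclidean_space set"
  assumes "X \<subseteq> Y"
  shows "emeasure lebesgue (enclosing_ball X) \<le> emeasure lebesgue (enclosing_ball Y)"
proof (cases "X = {}")
  case True
  then show ?thesis by (simp add: enclosing_ball_def)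
next
  case False
  show ?thesis
  proof (cases "bounded Y")
    case False
    then show ?thesis by (simp add: emeasure_enclosing_ball_unbounded)
  next
    case True
    then have "bounded X" using \<open>X \<subseteq> Y\<close> by (rule bounded_subset)
    then have "0 \<le> enclosing_radius X" using \<open>X \<noteq> {}\<close> by (intro enclosing_radius_nonneg)
    moreover have "enclosing_radius X \<le> enclosing_radius Y"
      using \<open>X \<noteq> {}\<close> \<open>X \<subseteq> Y\<close> \<open>bounded Y\<close> by (rule enclosing_radius_mono)
    moreover have "Y \<noteq> {}" using \<open>X \<noteq> {}\<close> \<open>X \<subseteq> Y\<close> by blast
    ultimately show ?thesis
      using \<open>X \<noteq> {}\<close> \<open>bounded X\<close> \<open>bounded Y\<close>
      by (auto simp: emeasure_enclosing_ball intro!: ennreal_leI mult_left_mono power_mono)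
  qed
qed

lemma incseq_unbounded_filterlim_at_top:
  fixes r :: "nat \<Rightarrow> real"
  assumes "incseq r" "\<not> bdd_above (range r)"
  shows "filterlim r at_top sequentially"
  unfolding filterlim_at_top eventually_sequentially
proof
  fix z
  obtain n where "z \<le> r n" using assms(2) by (meson bdd_above.I2 linorder_le_cases)
  then show "\<exists>n. \<forall>m\<ge>n. z \<le> r m" using \<open>incseq r\<close> by (meson incseq_def order_trans)
qed

lemma incseq_enclosing_radius:
  fixes X :: "nat \<Rightarrow> 'a::heine_borel set"
  assumes "incseq X" "X 0 \<noteq> {}" "\<forall>n. bounded (X n)"
  shows "incseq (\<lambda>n. enclosing_radius (X n))"
  unfolding incseq_def
  by (metis assms enclosing_radius_mono incseqD le0 subset_empty)

lemma SUP_emeasure_enclosing_ball_eq_infinity: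
  fixes X :: "nat \<Rightarrow> 'a::euclidean_space set"
  assumes "incseq X" "X 0 \<noteq> {}" "\<forall>n. bounded (X n)"
    and "\<not> bdd_above (range (\<lambda>n. enclosing_radius (X n)))"
  shows "(SUP n. emeasure lebesgue (enclosing_ball (X n))) = \<infinity>"
proof -
  define V where "V = unit_ball_vol DIM('a)"
  have "V > 0" by (simp add: V_def)
  have "filterlim (\<lambda>n. V * enclosing_radius (X n) ^ DIM('a)) at_top sequentially"
    using incseq_unbounded_filterlim_at_top[OF incseq_enclosing_radius[OF assms(1-3)] assms(4)]
    by (intro filterlim_tendsto_pos_mult_at_top[OF tendsto_const \<open>V > 0\<close>] filterlim_pow_at_top)
      simp_all
  moreover have "emeasure lebesgue (enclosing_ball (X n))
      = ennreal (V * enclosing_radius (X n) ^ DIM('a))" for n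
    using assms(1-3) by (metis V_def emeasure_enclosing_ball incseqD le0 subset_empty)
  ultimately have "(\<lambda>n. emeasure lebesgue (enclosing_ball (X n))) \<longlonglongrightarrow> \<infinity>"
    unfolding infinity_ennreal_def by (simp add: ennreal_tendsto_top_eq_at_top)
  moreover have "incseq (\<lambda>n. emeasure lebesgue (enclosing_ball (X n)))"
    using \<open>incseq X\<close> by (auto simp: incseq_def intro: emeasure_enclosing_ball_mono)
  ultimately show ?thesis using LIMSEQ_SUP LIMSEQ_unique by blast
qed

lemma emeasure_enclosing_ball_Union_le_SUP_of_nonempty:
  fixes X :: "nat \<Rightarrow> 'a::euclidean_space set"
  assumes "incseq X" "X 0 \<noteq> {}"
  shows "emeasure lebesgue (enclosing_ball (\<Union>n. X n))
           \<le> (SUP n. emeasure lebesgue (enclosing_ball (X n)))"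
    (is "?M (\<Union>n. X n) \<le> ?S")
proof (cases "(\<forall>n. bounded (X n)) \<and> bdd_above (range (\<lambda>n. enclosing_radius (X n)))")
  case False
  moreover have "?S = \<infinity>" if "\<not> bounded (X n)" for n
    using that SUP_upper[of n UNIV "\<lambda>n. ?M (X n)"] emeasure_enclosing_ball_unbounded
    by (metis infinity_ennreal_def top.extremum_unique UNIV_I)
  ultimately have "?S = \<infinity>" using SUP_emeasure_enclosing_ball_eq_infinity[OF assms] by metis
  then show ?thesis by (metis infinity_ennreal_def top_greatest)
next
  case True
  then have bounded: "\<forall>n. bounded (X n)" and bdd: "bdd_above (range (\<lambda>n. enclosing_radius (X n)))"
    by auto
  define V where "V = unit_ball_vol DIM('a)"
  define L where "L = (SUP n. enclosing_radius (X n))"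
  obtain c where cover: "(\<Union>n. X n) \<subseteq> cball c L"
    using incseq_Union_subset_cball_SUP_enclosing_radius[OF assms bounded bdd] unfolding L_def by blast
  have "(\<Union>n. X n) \<noteq> {}" using assms(2) by blast
  moreover have "bounded (\<Union>n. X n)" using cover bounded_cball bounded_subset by blast
  ultimately have "?M (\<Union>n. X n) = ennreal (V * enclosing_radius (\<Union>n. X n) ^ DIM('a))"
    by (simp add: emeasure_enclosing_ball V_def)
  also have "\<dots> \<le> ennreal (V * L ^ DIM('a))"
    using enclosing_radius_nonneg[OF \<open>(\<Union>n. X n) \<noteq> {}\<close> \<open>bounded (\<Union>n. X n)\<close>]
      enclosing_radius_le[OF \<open>(\<Union>n. X n) \<noteq> {}\<close> cover]
    by (intro ennreal_leI mult_left_mono power_mono) (simp_all add: V_def)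
  also have "\<dots> \<le> ?S"
  proof (rule Lim_bounded[where M = 0])
    have "X n \<noteq> {}" for n using assms by (metis incseqD le0 subset_empty)
    then have M: "?M (X n) = ennreal (V * enclosing_radius (X n) ^ DIM('a))" for n
      using bounded by (simp add: emeasure_enclosing_ball V_def)
    show "(\<lambda>n. ?M (X n)) \<longlonglongrightarrow> ennreal (V * L ^ DIM('a))"
      unfolding M L_def using bdd incseq_enclosing_radius[OF assms bounded]
      by (intro tendsto_ennrealI tendsto_intros LIMSEQ_incseq_SUP)
  qed (auto intro: SUP_upper)
  finally show ?thesis .
qed

lemma emeasure_enclosing_ball_Union_le_SUP:
  fixes X :: "nat \<Rightarrow> 'a::euclidean_space set"
  assumes "incseq X"
  shows "emeasure lebesgue (enclosing_ball (\<Union>n. X n))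
           \<le> (SUP n. emeasure lebesgue (enclosing_ball (X n)))"
proof (cases "\<exists>k. X k \<noteq> {}")
  case False
  then have "(\<Union>n. X n) = X 0" by simp
  then show ?thesis by (metis SUP_upper UNIV_I)
next
  case True
  then obtain k where "X k \<noteq> {}" by blast
  have "incseq (\<lambda>n. X (n + k))" using \<open>incseq X\<close> by (simp add: incseq_def)
  moreover have "(\<Union>n. X (n + k)) = (\<Union>n. X n)"
    using \<open>incseq X\<close> by (auto intro: incseqD[OF \<open>incseq X\<close> le_add1, THEN subsetD])
  ultimately have "emeasure lebesgue (enclosing_ball (\<Union>n. X n))
      \<le> (SUP n. emeasure lebesgue (enclosing_ball (X (n + k))))"
    using emeasure_enclosing_ball_Union_le_SUP_of_nonempty[of "\<lambda>n. X (n + k)"] \<open>X k \<noteq> {}\<close> by simp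
  also have "\<dots> \<le> (SUP n. emeasure lebesgue (enclosing_ball (X n)))"
    by (rule SUP_mono) blast
  finally show ?thesis .
qed

theorem lemma9:
  fixes X :: "nat \<Rightarrow> 'a::euclidean_space set"
  assumes "incseq X"
  shows "(\<lambda>n. emeasure lebesgue (enclosing_ball (X n)))
           \<longlonglongrightarrow> emeasure lebesgue (enclosing_ball (\<Union>n. X n))
         \<and> emeasure lebesgue (enclosing_ball (\<Union>n. X n))
           = (SUP n. emeasure lebesgue (enclosing_ball (X n)))"
proof -
  have "incseq (\<lambda>n. emeasure lebesgue (enclosing_ball (X n)))"
    using assms by (auto simp: incseq_def intro: emeasure_enclosing_ball_mono)
  moreover have "emeasure lebesgue (enclosing_ball (\<Union>n. X n))
      = (SUP n. emeasure lebesgue (enclosing_ball (X n)))"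
    by (intro order.antisym emeasure_enclosing_ball_Union_le_SUP[OF assms] SUP_least
        emeasure_enclosing_ball_mono) blast
  ultimately show ?thesis by (simp add: LIMSEQ_SUP)
qed

end
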